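(* If $G$ is a finitely generated group of exponential growth, then $\mathrm{WP}_G\notin\mathrm{DTIME}_1(o(n^2))$.
   Context: $\mathrm{WP}_G$ is the word problem $\{w\in S^{*}: w=_G e\}$ for a finite symmetric generating set $S$. $\mathrm{DTIME}_1(o(n^2))$ is the class of languages decided by a deterministic single-tape Turing machine in time $o(n^2)$. $G$ has exponential growth if its growth function $\gamma(n)=\#\{g: l_S(g)\le n\}$ satisfies $\gamma(n)\ge a^n$ for some $a>1$ and all $n$. *)

theory Defs
  imports "HOL-Algebra.Algebra" "HOL-Library.Landau_Symbols"
begin

definition word_eval :: "('a, 'b) monoid_scheme \<Rightarrow> 'a list \<Rightarrow> 'a" where
  "word_eval G w = foldr (\<lambda>x y. x \<otimes>\<^bsub>G\<^esub> y) w \<one>\<^bsub>G\<^esub>"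

definition finite_symmetric_generating_set :: "('a, 'b) monoid_scheme \<Rightarrow> 'a set \<Rightarrow> bool" where
  "finite_symmetric_generating_set G S \<longleftrightarrow>
     finite S \<and> S \<subseteq> carrier G \<and> (\<forall>s\<in>S. inv\<^bsub>G\<^esub> s \<in> S) \<and> generate G S = carrier G"

definition word_problem :: "('a, 'b) monoid_scheme \<Rightarrow> 'a set \<Rightarrow> 'a list set" where
  "word_problem G S = {w \<in> lists S. word_eval G w = \<one>\<^bsub>G\<^esub>}"

definition word_length :: "('a, 'b) monoid_scheme \<Rightarrow> 'a set \<Rightarrow> 'a \<Rightarrow> nat" where
  "word_length G S g = (LEAST n. \<exists>w\<in>lists S. length w = n \<and> word_eval G w = g)"

definition growth :: "('a, 'b) monoid_scheme \<Rightarrow> 'a set \<Rightarrow> nat \<Rightarrow> nat" where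
  "growth G S n = card {g \<in> carrier G. word_length G S g \<le> n}"

definition exponential_growth :: "('a, 'b) monoid_scheme \<Rightarrow> 'a set \<Rightarrow> bool" where
  "exponential_growth G S \<longleftrightarrow> (\<exists>a::real. a > 1 \<and> (\<forall>n. real (growth G S n) \<ge> a ^ n))"

datatype dir = Left | Right | Stay

fun dir_shift :: "dir \<Rightarrow> int" where
  "dir_shift Left = -1" | "dir_shift Right = 1" | "dir_shift Stay = 0"

text \<open>States and tape symbols are coded as natural numbers; the input alphabet
  (of type 'a) is embedded into the tape alphabet by enc. The tape is two-way infinite.\<close>
record 'a tm =
  states :: "nat set"
  tape_alph :: "nat set"
  blank :: nat
  start :: nat
  acc :: nat
  rej :: nat
  delta :: "nat \<Rightarrow> nat \<Rightarrow> nat \<times> nat \<times> dir"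
  enc :: "'a \<Rightarrow> nat"

definition wf_tm :: "'a set \<Rightarrow> 'a tm \<Rightarrow> bool" where
  "wf_tm \<Sigma> M \<longleftrightarrow> finite (states M) \<and> finite (tape_alph M) \<and>
     start M \<in> states M \<and> acc M \<in> states M \<and> rej M \<in> states M \<and> acc M \<noteq> rej M \<and>
     blank M \<in> tape_alph M \<and> enc M ` \<Sigma> \<subseteq> tape_alph M \<and> blank M \<notin> enc M ` \<Sigma> \<and>
     inj_on (enc M) \<Sigma> \<and>
     (\<forall>q\<in>states M. \<forall>s\<in>tape_alph M. fst (delta M q s) \<in> states M \<and>
                                       fst (snd (delta M q s)) \<in> tape_alph M)"

type_synonym config = "nat \<times> (int \<Rightarrow> nat) \<times> int"

fun tm_step :: "'a tm \<Rightarrow> config \<Rightarrow> config" where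
  "tm_step M (q, tp, h) =
     (if q = acc M \<or> q = rej M then (q, tp, h)
      else (case delta M q (tp h) of (q', s, d) \<Rightarrow> (q', tp(h := s), h + dir_shift d)))"

definition tm_init :: "'a tm \<Rightarrow> 'a list \<Rightarrow> config" where
  "tm_init M w = (start M,
     (\<lambda>i. if 0 \<le> i \<and> i < int (length w) then enc M (w ! nat i) else blank M), 0)"

definition tm_run :: "'a tm \<Rightarrow> 'a list \<Rightarrow> nat \<Rightarrow> config" where
  "tm_run M w k = (tm_step M ^^ k) (tm_init M w)"

definition halts_within :: "'a tm \<Rightarrow> 'a list \<Rightarrow> nat \<Rightarrow> bool" where
  "halts_within M w k \<longleftrightarrow> fst (tm_run M w k) \<in> {acc M, rej M}"

definition accepts :: "'a tm \<Rightarrow> 'a list \<Rightarrow> bool" where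
  "accepts M w \<longleftrightarrow> (\<exists>k. fst (tm_run M w k) = acc M)"

definition decides_in_time :: "'a set \<Rightarrow> 'a tm \<Rightarrow> 'a list set \<Rightarrow> (nat \<Rightarrow> nat) \<Rightarrow> bool" where
  "decides_in_time \<Sigma> M L T \<longleftrightarrow> wf_tm \<Sigma> M \<and>
     (\<forall>w\<in>lists \<Sigma>. halts_within M w (T (length w)) \<and> (accepts M w \<longleftrightarrow> w \<in> L))"

definition DTIME1_o_n2 :: "'a set \<Rightarrow> 'a list set \<Rightarrow> bool" where
  "DTIME1_o_n2 \<Sigma> L \<longleftrightarrow>
     (\<exists>(M :: 'a tm) (T :: nat \<Rightarrow> nat).
        (\<lambda>n. real (T n)) \<in> o(\<lambda>n. real n ^ 2) \<and> decides_in_time \<Sigma> M L T)"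

end

theory Submission
  imports Defs
begin

text \<open>Hennie's crossing-sequence argument. By exponential growth there are at least a^n/2 elements g
  represented by words u_g of a common length N \<in> {n, n+1}; let W_g be the trivial word
  (u_g s^n)(u_g s^n)^{-1}, of length at most 6n. At each of the n boundaries inside the block s^n,
  cutting W_g and pasting the tail of W_h gives a word that is trivial only if g = h, so a machine
  deciding the word problem produces pairwise different crossing sequences there on the words W_g.
  Fewer than (|Q|+1)^k crossing sequences have length below k; choosing k \<approx> n/m with (|Q|+1)^k
  small against a^n, most crossing sequences at each boundary have length at least k. Since one
  step crosses at most one boundary, some W_g needs about n^2/(2m) steps, contradicting a running
  time of o(n^2).\<close>

section \<open>Words over a group\<close>

lemma word_eval_Nil [simp]: "word_eval G [] = \<one>\<^bsub>G\<^esub>"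
  by (simp add: word_eval_def)

lemma word_eval_Cons [simp]: "word_eval G (x # w) = x \<otimes>\<^bsub>G\<^esub> word_eval G w"
  by (simp add: word_eval_def)

context group
begin

lemma word_eval_closed: "set w \<subseteq> carrier G \<Longrightarrow> word_eval G w \<in> carrier G"
  by (induction w) auto

lemma word_eval_append:
  "set x \<subseteq> carrier G \<Longrightarrow> set y \<subseteq> carrier G \<Longrightarrow> word_eval G (x @ y) = word_eval G x \<otimes> word_eval G y"
  by (induction x) (auto simp: word_eval_closed m_assoc)

lemma word_eval_append_inverse_word:
  "set x \<subseteq> carrier G \<Longrightarrow> word_eval G (x @ rev (map (m_inv G) x)) = \<one>"
proof (induction x)
  case (Cons a x)
  then have a: "a \<in> carrier G" and x: "set x \<subseteq> carrier G" by auto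
  then have "set (x @ rev (map (m_inv G) x)) \<subseteq> carrier G" by auto
  then have "word_eval G ((a # x) @ rev (map (m_inv G) (a # x)))
      = a \<otimes> (word_eval G (x @ rev (map (m_inv G) x)) \<otimes> word_eval G [inv a])"
    using word_eval_append[of "x @ rev (map (m_inv G) x)" "[inv a]"] a by simp
  also have "\<dots> = \<one>" using Cons.IH[OF x] a by simp
  finally show ?case .
qed simp

lemma word_eval_pad_commutator:
  "s \<in> carrier G \<Longrightarrow> set w \<subseteq> carrier G \<Longrightarrow>
     word_eval G (concat (replicate j [s, inv s]) @ w) = word_eval G w"
  by (induction j) (auto simp: word_eval_closed m_assoc[symmetric])

lemma word_eval_eq_if_trivial_with_suffix:
  assumes "set x1 \<subseteq> carrier G" "set x2 \<subseteq> carrier G" "set y \<subseteq> carrier G"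
    and "word_eval G (x1 @ y) = \<one>" "word_eval G (x2 @ y) = \<one>"
  shows "word_eval G x1 = word_eval G x2"
proof -
  have "word_eval G x1 = inv (word_eval G y)" "word_eval G x2 = inv (word_eval G y)"
    using assms by (auto simp: word_eval_append word_eval_closed intro!: inv_equality[symmetric])
  then show ?thesis by simp
qed

lemma exists_word_of_generate:
  assumes "S \<subseteq> carrier G" "\<forall>s\<in>S. inv s \<in> S" "g \<in> generate G S"
  shows "\<exists>w\<in>lists S. word_eval G w = g"
  using assms(3)
proof (induction g rule: generate.induct)
  case one
  show ?case by (intro bexI[of _ "[]"]) auto
next
  case (incl h)
  then show ?case using assms by (intro bexI[of _ "[h]"]) auto
next
  case (inv h)
  then show ?case using assms by (intro bexI[of _ "[inv h]"]) auto
next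
  case (eng h1 h2)
  then obtain w1 w2 where "w1 \<in> lists S" "w2 \<in> lists S" "word_eval G w1 = h1" "word_eval G w2 = h2"
    by blast
  then show ?case using assms(1) word_eval_append[of w1 w2]
    by (intro bexI[of _ "w1 @ w2"]) (auto simp: in_lists_conv_set)
qed

end

definition word_values :: "('a, 'b) monoid_scheme \<Rightarrow> 'a set \<Rightarrow> nat \<Rightarrow> 'a set" where
  "word_values G S k = word_eval G ` {w. set w \<subseteq> S \<and> length w = k}"

lemma finite_word_values: "finite S \<Longrightarrow> finite (word_values G S k)"
  unfolding word_values_def by (simp add: finite_lists_length_eq)

context group
begin

lemma word_length_ball_subset_word_values:
  assumes S: "finite_symmetric_generating_set G S" and s: "s \<in> S"
  shows "{g \<in> carrier G. word_length G S g \<le> n} \<subseteq> word_values G S n \<union> word_values G S (Suc n)"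
proof
  fix g assume "g \<in> {g \<in> carrier G. word_length G S g \<le> n}"
  then have g: "g \<in> carrier G" "word_length G S g \<le> n" by auto
  have S_sub: "S \<subseteq> carrier G" and S_inv: "\<forall>s\<in>S. inv s \<in> S"
    using S by (auto simp: finite_symmetric_generating_set_def)
  have "\<exists>k. \<exists>w\<in>lists S. length w = k \<and> word_eval G w = g"
    using exists_word_of_generate[OF S_sub S_inv] g(1) S
    by (auto simp: finite_symmetric_generating_set_def)
  from LeastI_ex[OF this] obtain w where w: "w \<in> lists S" "length w = word_length G S g" "word_eval G w = g"
    unfolding word_length_def by blast
  define k where "k = (if even (n - length w) then n else Suc n)"
  define v where "v = concat (replicate ((k - length w) div 2) [s, inv s]) @ w"
  have "even (k - length w)" "length w \<le> k" unfolding k_def using g(2) w(2) by auto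
  then have "length v = k" unfolding v_def by (simp add: length_concat sum_list_replicate) presburger
  moreover have "set v \<subseteq> S" unfolding v_def using w(1) s S_inv by auto
  moreover have "word_eval G v = g"
    unfolding v_def using word_eval_pad_commutator[of s w] w s S_sub by (auto simp: in_lists_conv_set)
  ultimately have "g \<in> word_values G S k" unfolding word_values_def by blast
  then show "g \<in> word_values G S n \<union> word_values G S (Suc n)" unfolding k_def by (auto split: if_splits)
qed

lemma growth_le_card_word_values:
  assumes "finite_symmetric_generating_set G S" "s \<in> S"
  shows "growth G S n \<le> card (word_values G S n) + card (word_values G S (Suc n))"
proof -
  have "finite S" using assms(1) by (simp add: finite_symmetric_generating_set_def)
  then have "growth G S n \<le> card (word_values G S n \<union> word_values G S (Suc n))"
    unfolding growth_def
    by (intro card_mono word_length_ball_subset_word_values[OF assms]) (simp add: finite_word_values)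
  also have "\<dots> \<le> card (word_values G S n) + card (word_values G S (Suc n))"
    by (rule card_Un_le)
  finally show ?thesis .
qed

lemma exists_large_word_values:
  assumes "finite_symmetric_generating_set G S" "s \<in> S" and "a ^ n \<le> real (growth G S n)"
  obtains N where "N = n \<or> N = Suc n" and "a ^ n \<le> 2 * real (card (word_values G S N))"
proof -
  have sum: "a ^ n \<le> real (card (word_values G S n)) + real (card (word_values G S (Suc n)))"
    using growth_le_card_word_values[OF assms(1,2), of n] assms(3) by linarith
  show ?thesis
  proof (cases "card (word_values G S (Suc n)) \<le> card (word_values G S n)")
    case True
    then show ?thesis using that[of n] sum by (simp add: of_nat_le_iff[symmetric])
  next
    case False
    then show ?thesis using that[of "Suc n"] sum by (simp add: of_nat_le_iff[symmetric])
  qed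
qed

lemma generating_set_nonempty:
  assumes "finite_symmetric_generating_set G S" and "exponential_growth G S"
  shows "S \<noteq> {}"
proof
  assume "S = {}"
  have "carrier G \<subseteq> {\<one>}"
  proof
    fix g assume "g \<in> carrier G"
    then obtain w where "w \<in> lists S" "word_eval G w = g"
      using exists_word_of_generate[of S g] assms(1) by (auto simp: finite_symmetric_generating_set_def)
    then show "g \<in> {\<one>}" using \<open>S = {}\<close> by auto
  qed
  then have "growth G S 1 \<le> card {\<one>}"
    unfolding growth_def by (intro card_mono) auto
  then have "real (growth G S 1) \<le> 1" by simp
  moreover obtain a :: real where "1 < a" "\<And>n. a ^ n \<le> real (growth G S n)"
    using assms(2) unfolding exponential_growth_def by blast
  ultimately show False by (metis not_le order.strict_trans2 power_one_right)
qed

lemma word_problem_fooling_set: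
  assumes S: "finite_symmetric_generating_set G S" and s: "s \<in> S"
  obtains W where
    "\<And>g. g \<in> word_values G S N \<Longrightarrow> W g \<in> word_problem G S \<and> length (W g) = 2 * (N + n)"
    "\<And>b g h. b \<in> {N<..N + n} \<Longrightarrow> g \<in> word_values G S N \<Longrightarrow> h \<in> word_values G S N \<Longrightarrow>
       take b (W g) @ drop b (W h) \<in> word_problem G S \<Longrightarrow> g = h"
proof -
  have S_sub: "S \<subseteq> carrier G" and S_inv: "\<forall>s\<in>S. inv s \<in> S"
    using S by (auto simp: finite_symmetric_generating_set_def)
  define u where "u g = (SOME w. set w \<subseteq> S \<and> length w = N \<and> word_eval G w = g)" for g
  have u: "set (u g) \<subseteq> S \<and> length (u g) = N \<and> word_eval G (u g) = g"
    if "g \<in> word_values G S N" for g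
    unfolding u_def by (rule someI_ex) (use that in \<open>auto simp: word_values_def\<close>)
  define W where "W g = (u g @ replicate n s) @ rev (map (m_inv G) (u g @ replicate n s))" for g
  have W_lists: "W g \<in> lists S" and W_length: "length (W g) = 2 * (N + n)"
    and W_trivial: "word_eval G (W g) = \<one>" if "g \<in> word_values G S N" for g
  proof -
    have v: "set (u g @ replicate n s) \<subseteq> S" using u[OF that] s by auto
    then show "W g \<in> lists S" unfolding W_def using S_inv by (auto simp: subset_iff)
    show "word_eval G (W g) = \<one>"
      unfolding W_def using v S_sub by (intro word_eval_append_inverse_word) auto
    show "length (W g) = 2 * (N + n)" unfolding W_def using u[OF that] by simp
  qed
  have take_W: "take b (W g) = u g @ replicate (b - N) s"
    if "g \<in> word_values G S N" "b \<in> {N<..N + n}" for g b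
    using u[OF that(1)] that(2) unfolding W_def by (simp add: min_def) linarith
  show ?thesis
  proof (rule that)
    fix g assume "g \<in> word_values G S N"
    then show "W g \<in> word_problem G S \<and> length (W g) = 2 * (N + n)"
      using W_lists W_length W_trivial by (simp add: word_problem_def)
  next
    fix b g h
    assume b: "b \<in> {N<..N + n}" and g: "g \<in> word_values G S N" and h: "h \<in> word_values G S N"
      and pasted: "take b (W g) @ drop b (W h) \<in> word_problem G S"
    have carrier: "set w \<subseteq> carrier G" if "w \<in> lists S" for w
      using that S_sub by auto
    have "word_eval G (take b (W g)) = word_eval G (take b (W h))"
    proof (rule word_eval_eq_if_trivial_with_suffix)
      show "word_eval G (take b (W g) @ drop b (W h)) = \<one>"
        using pasted by (simp add: word_problem_def)
      show "word_eval G (take b (W h) @ drop b (W h)) = \<one>" using W_trivial[OF h] by simp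
    qed (use W_lists[OF g] W_lists[OF h] carrier in \<open>auto dest: in_set_takeD in_set_dropD\<close>)
    moreover have "word_eval G (replicate (b - N) s) \<in> carrier G"
      using s S_sub by (intro word_eval_closed) auto
    moreover have "g \<in> carrier G" "h \<in> carrier G"
      using u[OF g] u[OF h] S_sub by (metis order_trans word_eval_closed)+
    ultimately show "g = h"
      using u[OF g] u[OF h] s S_sub
      by (simp add: take_W[OF g b] take_W[OF h b] word_eval_append subset_iff)
  qed
qed

end

definition is_run :: "'a tm \<Rightarrow> (nat \<Rightarrow> config) \<Rightarrow> bool" where
  "is_run M R \<longleftrightarrow> (\<forall>t. R (Suc t) = tm_step M (R t))"

abbreviation head_of :: "config \<Rightarrow> int" where "head_of c \<equiv> snd (snd c)"
abbreviation tape_of :: "config \<Rightarrow> int \<Rightarrow> nat" where "tape_of c \<equiv> fst (snd c)"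
abbreviation halted :: "'a tm \<Rightarrow> config \<Rightarrow> bool" where "halted M c \<equiv> fst c \<in> {acc M, rej M}"

lemma tm_step_halted: "halted M c \<Longrightarrow> tm_step M c = c"
  by (cases c) auto

lemma tm_step_local:
  assumes "fst c = fst d" "head_of c = head_of d" "tape_of c (head_of c) = tape_of d (head_of d)"
  shows "fst (tm_step M c) = fst (tm_step M d) \<and> head_of (tm_step M c) = head_of (tm_step M d) \<and>
     (\<forall>i. tape_of c i = tape_of d i \<longrightarrow> tape_of (tm_step M c) i = tape_of (tm_step M d) i)"
  using assms by (cases c; cases d) (auto split: prod.splits)

lemma tm_step_tape_other: "i \<noteq> head_of c \<Longrightarrow> tape_of (tm_step M c) i = tape_of c i"
  by (cases c) (auto split: prod.splits)

lemma tm_step_head_move: "\<bar>head_of (tm_step M c) - head_of c\<bar> \<le> 1"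
proof (cases c)
  case (fields q tp h)
  then show ?thesis
  proof (cases "delta M q (tp h)")
    case (fields q' s d)
    then show ?thesis using \<open>c = (q, tp, h)\<close> by (cases d) auto
  qed
qed

lemma run_halted_stays:
  assumes R: "is_run M R" and "halted M (R t)" and "t \<le> t'"
  shows "R t' = R t"
  using assms(3) by (induction t' rule: dec_induct) (use assms(2) R in \<open>auto simp: is_run_def tm_step_halted\<close>)

lemma tm_run_Suc: "tm_run M w (Suc t) = tm_step M (tm_run M w t)"
  by (simp add: tm_run_def)

lemma is_run_tm_run: "is_run M (tm_run M w)"
  by (simp add: is_run_def tm_run_Suc)

lemma tm_run_in_states:
  assumes wf: "wf_tm \<Sigma> M" and w: "w \<in> lists \<Sigma>"
  shows "fst (tm_run M w t) \<in> states M"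
proof -
  have "fst (tm_run M w t) \<in> states M \<and> (\<forall>i. tape_of (tm_run M w t) i \<in> tape_alph M)"
  proof (induction t)
    case 0
    have "w ! nat i \<in> \<Sigma>" if "0 \<le> i" "i < int (length w)" for i
      using w that by (simp add: in_lists_conv_set nat_less_iff)
    then show ?case using wf by (auto simp: tm_run_def tm_init_def wf_tm_def)
  next
    case (Suc t)
    obtain q tp h where c: "tm_run M w t = (q, tp, h)" by (metis prod_cases3)
    have q: "q \<in> states M" and tp: "\<forall>i. tp i \<in> tape_alph M" using Suc c by auto
    show ?case
    proof (cases "q = acc M \<or> q = rej M")
      case True
      then show ?thesis using Suc c by (simp add: tm_run_Suc)
    next
      case False
      obtain q' s d where dl: "delta M q (tp h) = (q', s, d)" by (metis prod_cases3)
      have "q' \<in> states M" "s \<in> tape_alph M"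
        using wf q tp dl unfolding wf_tm_def by (metis fst_conv snd_conv)+
      then show ?thesis using False c dl tp by (simp add: tm_run_Suc)
    qed
  qed
  then show ?thesis ..
qed

lemma accepted_within_time:
  assumes d: "decides_in_time \<Sigma> M Lang T" and w: "w \<in> lists \<Sigma>" "w \<in> Lang"
  shows "fst (tm_run M w (T (length w))) = acc M"
proof -
  have h: "halted M (tm_run M w (T (length w)))" and a: "accepts M w"
    using d w unfolding decides_in_time_def halts_within_def by auto
  obtain k where k: "fst (tm_run M w k) = acc M" using a unfolding accepts_def by blast
  show ?thesis
  proof (cases "k \<le> T (length w)")
    case True
    have "halted M (tm_run M w k)" using k by simp
    from run_halted_stays[OF is_run_tm_run this True] show ?thesis using k by simp
  next
    case False
    then have "T (length w) \<le> k" by simp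
    from run_halted_stays[OF is_run_tm_run h this] show ?thesis using k by simp
  qed
qed

section \<open>Crossing sequences and cut-and-paste\<close>

text \<open>The predicate L is one side of a boundary between tape cells; every move of the head across
  the boundary records the state entered.\<close>

definition crossing_seq :: "(int \<Rightarrow> bool) \<Rightarrow> (nat \<Rightarrow> config) \<Rightarrow> nat \<Rightarrow> nat list" where
  "crossing_seq L R t = map (\<lambda>i. fst (R (Suc i)))
     (filter (\<lambda>i. L (head_of (R i)) \<noteq> L (head_of (R (Suc i)))) [0..<t])"

lemma crossing_seq_0 [simp]: "crossing_seq L R 0 = []"
  by (simp add: crossing_seq_def)

lemma crossing_seq_Suc:
  "crossing_seq L R (Suc t) = crossing_seq L R t @
     (if L (head_of (R t)) \<noteq> L (head_of (R (Suc t))) then [fst (R (Suc t))] else [])"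
  by (simp add: crossing_seq_def)

lemma length_crossing_seq_Suc:
  "length (crossing_seq L R (Suc t)) = length (crossing_seq L R t) +
     (if L (head_of (R t)) \<noteq> L (head_of (R (Suc t))) then 1 else 0)"
  by (simp add: crossing_seq_Suc)

lemma crossing_seq_Not: "crossing_seq (\<lambda>h. \<not> L h) R t = crossing_seq L R t"
  by (simp add: crossing_seq_def)

lemma crossing_seq_prefix: "t \<le> t' \<Longrightarrow> \<exists>zs. crossing_seq L R t' = crossing_seq L R t @ zs"
  by (induction t' rule: dec_induct) (auto simp: crossing_seq_Suc)

lemma set_crossing_seq: "set (crossing_seq L R t) \<subseteq> range (\<lambda>i. fst (R (Suc i)))"
  by (auto simp: crossing_seq_def)

lemma crossing_seq_stays_inside:
  assumes R: "is_run M R" and "t0 \<le> t" and L0: "L (head_of (R t0))"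
    and inside: "\<forall>j. t0 \<le> j \<and> j < t \<longrightarrow> L (head_of (R j)) = L (head_of (R (Suc j)))"
  shows "L (head_of (R t)) \<and> (\<forall>i. \<not> L i \<longrightarrow> tape_of (R t) i = tape_of (R t0) i) \<and>
    crossing_seq L R t = crossing_seq L R t0"
  using assms(2) inside
proof (induction t rule: dec_induct)
  case base
  then show ?case using L0 by simp
next
  case (step n)
  then have IH: "L (head_of (R n))" "\<forall>i. \<not> L i \<longrightarrow> tape_of (R n) i = tape_of (R t0) i"
    "crossing_seq L R n = crossing_seq L R t0" and stay: "L (head_of (R (Suc n)))"
    by auto
  have "tape_of (R (Suc n)) i = tape_of (R n) i" if "\<not> L i" for i
  proof -
    have "i \<noteq> head_of (R n)" using that IH(1) by auto
    then show ?thesis using R tm_step_tape_other by (simp add: is_run_def)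
  qed
  then show ?case using IH stay by (auto simp: crossing_seq_Suc)
qed

lemma first_exit:
  assumes R: "is_run M R" and "t0 \<le> T" and L0: "L (head_of (R t0))"
    and longer: "length (crossing_seq L R t0) < length (crossing_seq L R T)"
  obtains t where "t0 \<le> t" "t < T" "L (head_of (R t))" "\<not> L (head_of (R (Suc t)))"
    "\<forall>i. \<not> L i \<longrightarrow> tape_of (R t) i = tape_of (R t0) i" "crossing_seq L R t = crossing_seq L R t0"
proof -
  define P where "P j \<longleftrightarrow> t0 \<le> j \<and> L (head_of (R j)) \<noteq> L (head_of (R (Suc j)))" for j
  have ex: "\<exists>j. P j \<and> j < T"
  proof (rule ccontr)
    assume "\<not> ?thesis"
    then have "\<forall>j. t0 \<le> j \<and> j < T \<longrightarrow> L (head_of (R j)) = L (head_of (R (Suc j)))"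
      unfolding P_def by auto
    from crossing_seq_stays_inside[OF R \<open>t0 \<le> T\<close> L0 this] longer show False by simp
  qed
  define t where "t = (LEAST j. P j)"
  have Pt: "P t" unfolding t_def using ex by (metis LeastI)
  have "t < T" using ex unfolding t_def by (meson Least_le le_less_trans)
  have before: "\<forall>j. t0 \<le> j \<and> j < t \<longrightarrow> L (head_of (R j)) = L (head_of (R (Suc j)))"
    using not_less_Least[of _ P] unfolding t_def P_def by blast
  have "t0 \<le> t" using Pt P_def by auto
  from crossing_seq_stays_inside[OF R this L0 before] Pt have
    "L (head_of (R t))" "\<not> L (head_of (R (Suc t)))"
    "\<forall>i. \<not> L i \<longrightarrow> tape_of (R t) i = tape_of (R t0) i" "crossing_seq L R t = crossing_seq L R t0"
    unfolding P_def by auto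
  then show ?thesis using that \<open>t0 \<le> t\<close> \<open>t < T\<close> by blast
qed

text \<open>Under this condition two runs leaving L land on the same cell, so the head position of the
  pasted run matches whichever run it is currently following.\<close>

definition single_exit :: "(int \<Rightarrow> bool) \<Rightarrow> bool" where
  "single_exit L \<longleftrightarrow> (\<exists>e. \<forall>h h'. L h \<longrightarrow> \<not> L h' \<longrightarrow> \<bar>h' - h\<bar> \<le> 1 \<longrightarrow> h' = e)"

lemma single_exit_less: "single_exit (\<lambda>h. h < b)"
  unfolding single_exit_def by (intro exI[of _ b]) auto

lemma single_exit_not_less: "single_exit (\<lambda>h. \<not> h < b)"
  unfolding single_exit_def by (intro exI[of _ "b - 1"]) auto

lemma single_exit_landing_eq:
  assumes exit: "single_exit L" and R: "is_run M R" and R': "is_run M R'"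
    and "L (head_of (R t))" "\<not> L (head_of (R (Suc t)))"
    and "L (head_of (R' t'))" "\<not> L (head_of (R' (Suc t')))"
  shows "head_of (R' (Suc t')) = head_of (R (Suc t))"
proof -
  obtain e where e: "\<And>h h'. L h \<Longrightarrow> \<not> L h' \<Longrightarrow> \<bar>h' - h\<bar> \<le> 1 \<Longrightarrow> h' = e"
    using exit unfolding single_exit_def by blast
  have "\<bar>head_of (R (Suc t)) - head_of (R t)\<bar> \<le> 1" "\<bar>head_of (R' (Suc t')) - head_of (R' t')\<bar> \<le> 1"
    using R R' tm_step_head_move by (simp_all add: is_run_def)
  then show ?thesis using e assms(4-7) by metis
qed

text \<open>The pasted configuration c currently follows the active run Ra at time ta, whose head is in L;
  the passive run Rp is parked at time tp, with its head in L as well, and supplies the tape outside L.\<close>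

definition spliced :: "(int \<Rightarrow> bool) \<Rightarrow> (nat \<Rightarrow> config) \<Rightarrow> nat \<Rightarrow> (nat \<Rightarrow> config) \<Rightarrow> nat \<Rightarrow> config \<Rightarrow> bool" where
  "spliced L Ra ta Rp tp c \<longleftrightarrow> L (head_of (Ra ta)) \<and> L (head_of (Rp tp)) \<and>
     fst c = fst (Ra ta) \<and> head_of c = head_of (Ra ta) \<and>
     (\<forall>i. L i \<longrightarrow> tape_of c i = tape_of (Ra ta) i) \<and> (\<forall>i. \<not> L i \<longrightarrow> tape_of c i = tape_of (Rp tp) i)"

lemma spliced_tm_step:
  assumes Ra: "is_run M Ra" and c: "spliced L Ra ta Rp tp c"
  shows "fst (tm_step M c) = fst (Ra (Suc ta))" "head_of (tm_step M c) = head_of (Ra (Suc ta))"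
    "\<forall>i. L i \<longrightarrow> tape_of (tm_step M c) i = tape_of (Ra (Suc ta)) i"
    "\<forall>i. \<not> L i \<longrightarrow> tape_of (tm_step M c) i = tape_of (Rp tp) i"
proof -
  have step: "Ra (Suc ta) = tm_step M (Ra ta)" using Ra by (simp add: is_run_def)
  have local: "fst (tm_step M c) = fst (Ra (Suc ta)) \<and> head_of (tm_step M c) = head_of (Ra (Suc ta)) \<and>
     (\<forall>i. tape_of c i = tape_of (Ra ta) i \<longrightarrow> tape_of (tm_step M c) i = tape_of (Ra (Suc ta)) i)"
    unfolding step by (rule tm_step_local) (use c in \<open>auto simp: spliced_def\<close>)
  then show "fst (tm_step M c) = fst (Ra (Suc ta))" "head_of (tm_step M c) = head_of (Ra (Suc ta))"
    "\<forall>i. L i \<longrightarrow> tape_of (tm_step M c) i = tape_of (Ra (Suc ta)) i"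
    using c by (auto simp: spliced_def)
  have "tape_of (tm_step M c) i = tape_of c i" if "\<not> L i" for i
  proof -
    have "i \<noteq> head_of c" using that c by (auto simp: spliced_def)
    then show ?thesis by (rule tm_step_tape_other)
  qed
  then show "\<forall>i. \<not> L i \<longrightarrow> tape_of (tm_step M c) i = tape_of (Rp tp) i"
    using c by (auto simp: spliced_def)
qed

lemma matching_crossing:
  assumes Ra: "is_run M Ra" and Rp: "is_run M Rp" and exit: "single_exit L"
    and cross: "L (head_of (Ra ta))" "\<not> L (head_of (Ra (Suc ta)))" "ta < Ta"
    and Lp: "L (head_of (Rp tp))" "tp \<le> Tp"
    and sync: "crossing_seq L Ra ta = crossing_seq L Rp tp"
    and final: "crossing_seq L Ra Ta = crossing_seq L Rp Tp"
  obtains t where "tp \<le> t" "t < Tp"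
    "fst (Rp (Suc t)) = fst (Ra (Suc ta))" "head_of (Rp (Suc t)) = head_of (Ra (Suc ta))"
    "\<forall>i. \<not> L i \<longrightarrow> tape_of (Rp (Suc t)) i = tape_of (Rp tp) i"
    "crossing_seq L Ra (Suc ta) = crossing_seq L Rp (Suc t)"
proof -
  have csa: "crossing_seq L Ra (Suc ta) = crossing_seq L Rp tp @ [fst (Ra (Suc ta))]"
    using cross sync by (simp add: crossing_seq_Suc)
  obtain zs where zs: "crossing_seq L Rp Tp = crossing_seq L Rp tp @ [fst (Ra (Suc ta))] @ zs"
    using crossing_seq_prefix[of "Suc ta" Ta L Ra] cross(3) csa final by auto
  then have "length (crossing_seq L Rp tp) < length (crossing_seq L Rp Tp)" by simp
  then obtain t where t: "tp \<le> t" "t < Tp" "L (head_of (Rp t))" "\<not> L (head_of (Rp (Suc t)))"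
      "\<forall>i. \<not> L i \<longrightarrow> tape_of (Rp t) i = tape_of (Rp tp) i"
      "crossing_seq L Rp t = crossing_seq L Rp tp"
    using first_exit[where L=L, OF Rp Lp(2) Lp(1)] by blast
  have csp: "crossing_seq L Rp (Suc t) = crossing_seq L Rp tp @ [fst (Rp (Suc t))]"
    using t by (simp add: crossing_seq_Suc)
  obtain zs' where "crossing_seq L Rp Tp = crossing_seq L Rp tp @ [fst (Rp (Suc t))] @ zs'"
    using crossing_seq_prefix[of "Suc t" Tp L Rp] t(2) csp by auto
  with zs have state: "fst (Rp (Suc t)) = fst (Ra (Suc ta))" by simp
  have head: "head_of (Rp (Suc t)) = head_of (Ra (Suc ta))"
    by (rule single_exit_landing_eq[OF exit Ra Rp cross(1,2) t(3,4)])
  have stepp: "Rp (Suc t) = tm_step M (Rp t)" using Rp by (simp add: is_run_def)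
  have tape: "tape_of (Rp (Suc t)) i = tape_of (Rp tp) i" if "\<not> L i" for i
  proof -
    have "i \<noteq> head_of (Rp t)" using that t(3) by auto
    then show ?thesis unfolding stepp using tm_step_tape_other[of i "Rp t" M] t(5) that by simp
  qed
  moreover have "crossing_seq L Ra (Suc ta) = crossing_seq L Rp (Suc t)" using csa csp state by simp
  ultimately show ?thesis using that[OF t(1,2) state head] by blast
qed

definition simulates :: "(int \<Rightarrow> bool) \<Rightarrow> (nat \<Rightarrow> config) \<Rightarrow> nat \<Rightarrow> (nat \<Rightarrow> config) \<Rightarrow> nat \<Rightarrow> config \<Rightarrow> bool" where
  "simulates L R1 t1 R2 t2 c \<longleftrightarrow> crossing_seq L R1 t1 = crossing_seq L R2 t2 \<and>
     (spliced L R1 t1 R2 t2 c \<or> spliced (\<lambda>h. \<not> L h) R2 t2 R1 t1 c)"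

lemma simulates_Not: "simulates (\<lambda>h. \<not> L h) R2 t2 R1 t1 c = simulates L R1 t1 R2 t2 c"
  by (auto simp: simulates_def crossing_seq_Not)

lemma spliced_step:
  assumes Ra: "is_run M Ra" and Rp: "is_run M Rp" and exit: "single_exit L"
    and c: "spliced L Ra ta Rp tp c" and running: "\<not> halted M c"
    and sync: "crossing_seq L Ra ta = crossing_seq L Rp tp"
    and final: "crossing_seq L Ra Ta = crossing_seq L Rp Tp"
    and "ta \<le> Ta" "tp \<le> Tp" and halted: "halted M (Ra Ta)"
  obtains ta' tp' where "ta' \<le> Ta" "tp' \<le> Tp" "ta + tp < ta' + tp'"
    "simulates L Ra ta' Rp tp' (tm_step M c)"
proof -
  have "ta \<noteq> Ta" using c running halted by (auto simp: spliced_def)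
  then have "ta < Ta" using \<open>ta \<le> Ta\<close> by simp
  have L: "L (head_of (Ra ta))" "L (head_of (Rp tp))" using c by (auto simp: spliced_def)
  note c' = spliced_tm_step[OF Ra c]
  show ?thesis
  proof (cases "L (head_of (Ra (Suc ta)))")
    case True
    then have "spliced L Ra (Suc ta) Rp tp (tm_step M c)"
      using L c' by (auto simp: spliced_def)
    moreover have "crossing_seq L Ra (Suc ta) = crossing_seq L Rp tp"
      using sync True L by (simp add: crossing_seq_Suc)
    ultimately show ?thesis
      using that[of "Suc ta" tp] \<open>ta < Ta\<close> \<open>tp \<le> Tp\<close> by (auto simp: simulates_def)
  next
    case False
    obtain t where t: "tp \<le> t" "t < Tp"
      "fst (Rp (Suc t)) = fst (Ra (Suc ta))" "head_of (Rp (Suc t)) = head_of (Ra (Suc ta))"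
      "\<forall>i. \<not> L i \<longrightarrow> tape_of (Rp (Suc t)) i = tape_of (Rp tp) i"
      "crossing_seq L Ra (Suc ta) = crossing_seq L Rp (Suc t)"
      using matching_crossing[OF Ra Rp exit L(1) False \<open>ta < Ta\<close> L(2) \<open>tp \<le> Tp\<close> sync final] .
    have "spliced (\<lambda>h. \<not> L h) Rp (Suc t) Ra (Suc ta) (tm_step M c)"
      using t False c' by (auto simp: spliced_def)
    then show ?thesis
      using that[of "Suc ta" "Suc t"] \<open>ta < Ta\<close> t by (auto simp: simulates_def)
  qed
qed

lemma simulates_step:
  assumes R1: "is_run M R1" and R2: "is_run M R2"
    and exits: "single_exit L" "single_exit (\<lambda>h. \<not> L h)"
    and sim: "simulates L R1 t1 R2 t2 c" and running: "\<not> halted M c"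
    and final: "crossing_seq L R1 T1 = crossing_seq L R2 T2"
    and "t1 \<le> T1" "t2 \<le> T2" and halted: "halted M (R1 T1)" "halted M (R2 T2)"
  obtains t1' t2' where "t1' \<le> T1" "t2' \<le> T2" "t1 + t2 < t1' + t2'"
    "simulates L R1 t1' R2 t2' (tm_step M c)"
  using sim unfolding simulates_def
proof (elim conjE disjE)
  assume "crossing_seq L R1 t1 = crossing_seq L R2 t2" "spliced L R1 t1 R2 t2 c"
  from spliced_step[OF R1 R2 exits(1) this(2) running this(1) final \<open>t1 \<le> T1\<close> \<open>t2 \<le> T2\<close> halted(1)]
  show thesis using that by blast
next
  assume "crossing_seq L R1 t1 = crossing_seq L R2 t2" "spliced (\<lambda>h. \<not> L h) R2 t2 R1 t1 c"
  moreover have "crossing_seq (\<lambda>h. \<not> L h) R2 T2 = crossing_seq (\<lambda>h. \<not> L h) R1 T1"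
    using final by (simp add: crossing_seq_Not)
  ultimately obtain t2' t1' where "t2' \<le> T2" "t1' \<le> T1" "t2 + t1 < t2' + t1'"
      "simulates (\<lambda>h. \<not> L h) R2 t2' R1 t1' (tm_step M c)"
    using spliced_step[OF R2 R1 exits(2) _ running _ _ \<open>t2 \<le> T2\<close> \<open>t1 \<le> T1\<close> halted(2)]
    by (metis crossing_seq_Not)
  then show thesis using that by (simp add: simulates_Not)
qed

text \<open>Every non-halting step advances t1 + t2, so the pasted run halts within T1 + T2 + 1 steps.\<close>

lemma simulates_run:
  assumes R1: "is_run M R1" and R2: "is_run M R2" and R3: "is_run M R3"
    and exits: "single_exit L" "single_exit (\<lambda>h. \<not> L h)"
    and start: "spliced L R1 0 R2 0 (R3 0)"
    and final: "crossing_seq L R1 T1 = crossing_seq L R2 T2"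
    and halted: "halted M (R1 T1)" "halted M (R2 T2)"
  shows "\<exists>t1 t2. t1 \<le> T1 \<and> t2 \<le> T2 \<and> (s \<le> t1 + t2 \<or> halted M (R3 s)) \<and>
    simulates L R1 t1 R2 t2 (R3 s)"
proof (induction s)
  case 0
  show ?case using start by (intro exI[of _ 0]) (simp add: simulates_def)
next
  case (Suc s)
  then obtain t1 t2 where t: "t1 \<le> T1" "t2 \<le> T2" "s \<le> t1 + t2 \<or> halted M (R3 s)"
    "simulates L R1 t1 R2 t2 (R3 s)"
    by blast
  have step: "R3 (Suc s) = tm_step M (R3 s)" using R3 by (simp add: is_run_def)
  show ?case
  proof (cases "halted M (R3 s)")
    case True
    then have "R3 (Suc s) = R3 s" using step tm_step_halted by metis
    then show ?thesis using t True by (intro exI[of _ t1] exI[of _ t2]) auto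
  next
    case False
    obtain t1' t2' where "t1' \<le> T1" "t2' \<le> T2" "t1 + t2 < t1' + t2'"
      "simulates L R1 t1' R2 t2' (R3 (Suc s))"
      using simulates_step[OF R1 R2 exits t(4) False final t(1,2) halted] unfolding step .
    then show ?thesis using t(3) False by (intro exI[of _ t1'] exI[of _ t2']) auto
  qed
qed

lemma spliced_run_final_state:
  assumes R1: "is_run M R1" and R2: "is_run M R2" and R3: "is_run M R3"
    and exits: "single_exit L" "single_exit (\<lambda>h. \<not> L h)"
    and start: "spliced L R1 0 R2 0 (R3 0)"
    and final: "crossing_seq L R1 T1 = crossing_seq L R2 T2"
    and halted: "halted M (R1 T1)" "halted M (R2 T2)"
  obtains t where "fst (R3 t) = fst (R1 T1) \<or> fst (R3 t) = fst (R2 T2)"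
proof -
  define s where "s = Suc (T1 + T2)"
  obtain t1 t2 where t: "t1 \<le> T1" "t2 \<le> T2" "halted M (R3 s)" "simulates L R1 t1 R2 t2 (R3 s)"
    using simulates_run[OF assms, of s] unfolding s_def by auto
  then have "fst (R3 s) = fst (R1 t1) \<and> halted M (R1 t1) \<or> fst (R3 s) = fst (R2 t2) \<and> halted M (R2 t2)"
    by (auto simp: simulates_def spliced_def)
  then have "fst (R3 s) = fst (R1 T1) \<or> fst (R3 s) = fst (R2 T2)"
    using run_halted_stays[OF R1 _ t(1)] run_halted_stays[OF R2 _ t(2)] by auto
  then show ?thesis by (rule that)
qed

lemma accepts_splice:
  assumes b: "0 < b" "b \<le> length w1" "b \<le> length w2"
    and acc1: "fst (tm_run M w1 T1) = acc M" and acc2: "fst (tm_run M w2 T2) = acc M"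
    and same: "crossing_seq (\<lambda>h. h < int b) (tm_run M w1) T1 =
      crossing_seq (\<lambda>h. h < int b) (tm_run M w2) T2"
  shows "accepts M (take b w1 @ drop b w2)"
proof -
  define w where "w = take b w1 @ drop b w2"
  have len: "length w = length w2" unfolding w_def using b by simp
  have left: "tape_of (tm_init M w) i = tape_of (tm_init M w1) i" if "i < int b" for i
  proof (cases "0 \<le> i")
    case True
    then have "nat i < b" using that by simp
    then have "w ! nat i = w1 ! nat i" unfolding w_def using b by (simp add: nth_append)
    then show ?thesis using True that b len by (simp add: tm_init_def)
  qed (simp add: tm_init_def)
  have right: "tape_of (tm_init M w) i = tape_of (tm_init M w2) i" if "\<not> i < int b" for i
  proof -
    have "0 \<le> i" "b \<le> nat i" using that b by auto
    then have "w ! nat i = w2 ! nat i" if "nat i < length w2"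
      unfolding w_def using b that by (simp add: nth_append)
    then show ?thesis using len \<open>0 \<le> i\<close> by (auto simp: tm_init_def)
  qed
  have "spliced (\<lambda>h. h < int b) (tm_run M w1) 0 (tm_run M w2) 0 (tm_run M w 0)"
    unfolding spliced_def tm_run_def using left right b by (simp add: tm_init_def)
  moreover have "halted M (tm_run M w1 T1)" "halted M (tm_run M w2 T2)" using acc1 acc2 by simp_all
  ultimately obtain t
    where "fst (tm_run M w t) = fst (tm_run M w1 T1) \<or> fst (tm_run M w t) = fst (tm_run M w2 T2)"
    using spliced_run_final_state[OF is_run_tm_run is_run_tm_run is_run_tm_run
        single_exit_less single_exit_not_less _ same] by blast
  then show ?thesis unfolding accepts_def w_def[symmetric] using acc1 acc2 by auto
qed

lemma sum_crossing_seq_length_le: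
  assumes R: "is_run M R" and B: "finite B"
  shows "(\<Sum>b\<in>B. length (crossing_seq (\<lambda>h. h < b) R t)) \<le> t"
proof (induction t)
  case (Suc t)
  define h where "h = head_of (R t)"
  define h' where "h' = head_of (R (Suc t))"
  have "\<bar>h' - h\<bar> \<le> 1" unfolding h_def h'_def using R tm_step_head_move by (metis is_run_def)
  then have crossed: "(if (h < b) \<noteq> (h' < b) then 1 else 0) \<le> (if b = max h h' then 1 else (0::nat))" for b
    by auto
  have "(\<Sum>b\<in>B. length (crossing_seq (\<lambda>h. h < b) R (Suc t))) =
        (\<Sum>b\<in>B. length (crossing_seq (\<lambda>h. h < b) R t)) + (\<Sum>b\<in>B. if (h < b) \<noteq> (h' < b) then 1 else 0)"
    unfolding h_def h'_def by (simp add: length_crossing_seq_Suc sum.distrib)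
  also have "(\<Sum>b\<in>B. if (h < b) \<noteq> (h' < b) then 1 else 0) \<le> (\<Sum>b\<in>B. if b = max h h' then 1 else (0::nat))"
    by (rule sum_mono) (use crossed in auto)
  also have "\<dots> \<le> 1" using B by (simp add: sum.delta)
  finally show ?case using Suc by simp
qed simp

section \<open>Fooling sets force quadratic time\<close>

lemma sum_power_le_Suc_power: "(1::nat) \<le> q \<Longrightarrow> (\<Sum>i<k. q ^ i) \<le> (q + 1) ^ k"
proof (induction k)
  case (Suc k)
  have "q ^ k \<le> q * (q + 1) ^ k" using Suc.prems power_mono[of q "q + 1" k] by (simp add: le_trans)
  then show ?case using Suc by simp
qed simp

lemma card_short_lists_le:
  assumes "finite Q" "1 \<le> card Q"
  shows "card {xs. set xs \<subseteq> Q \<and> length xs < k} \<le> (card Q + 1) ^ k"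
proof -
  have "{xs. set xs \<subseteq> Q \<and> length xs < k} = (\<Union>i<k. {xs. set xs \<subseteq> Q \<and> length xs = i})" by auto
  then have "card {xs. set xs \<subseteq> Q \<and> length xs < k} \<le> (\<Sum>i<k. card {xs. set xs \<subseteq> Q \<and> length xs = i})"
    using card_UN_le[of "{..<k}"] by simp
  also have "\<dots> = (\<Sum>i<k. card Q ^ i)" using assms by (simp add: card_lists_length_eq)
  also have "\<dots> \<le> (card Q + 1) ^ k" using sum_power_le_Suc_power assms(2) by blast
  finally show ?thesis .
qed

lemma sum_length_inj_lists_ge:
  assumes A: "finite A" and inj: "inj_on f A" and sub: "\<And>g. g \<in> A \<Longrightarrow> set (f g) \<subseteq> Q"
    and Q: "finite Q" "1 \<le> card Q"
  shows "k * card A \<le> (\<Sum>g\<in>A. length (f g)) + k * (card Q + 1) ^ k"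
proof -
  define short where "short = {g\<in>A. length (f g) < k}"
  define long where "long = {g\<in>A. k \<le> length (f g)}"
  have "A = short \<union> long" "short \<inter> long = {}" unfolding short_def long_def by auto
  then have "card A = card short + card long"
    using A by (simp add: card_Un_disjoint)
  moreover have "card short \<le> (card Q + 1) ^ k"
  proof -
    have "card short = card (f ` short)"
      using inj by (intro card_image[symmetric] inj_on_subset[OF inj]) (auto simp: short_def)
    also have "\<dots> \<le> card {xs. set xs \<subseteq> Q \<and> length xs < k}"
      using sub Q by (intro card_mono finite_subset[OF _ finite_lists_length_le[of Q k]]) (auto simp: short_def)
    also have "\<dots> \<le> (card Q + 1) ^ k" by (rule card_short_lists_le[OF Q])
    finally show ?thesis .
  qed
  moreover have "k * card long \<le> (\<Sum>g\<in>A. length (f g))"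
  proof -
    have "k * card long = (\<Sum>g\<in>long. k)" by simp
    also have "\<dots> \<le> (\<Sum>g\<in>long. length (f g))" by (rule sum_mono) (simp add: long_def)
    also have "\<dots> \<le> (\<Sum>g\<in>A. length (f g))" by (rule sum_mono2) (use A long_def in auto)
    finally show ?thesis .
  qed
  ultimately show ?thesis
    by (metis add.commute add_le_mono add_mult_distrib2 mult_le_mono2)
qed

lemma inj_on_crossing_seq_fooling_set:
  assumes decides: "decides_in_time \<Sigma> M Lang T" and Lang: "Lang \<subseteq> lists \<Sigma>"
    and words: "\<And>g. g \<in> E \<Longrightarrow> W g \<in> Lang \<and> length (W g) = l"
    and b: "0 < b" "b \<le> l"
    and fooling: "\<And>g h. g \<in> E \<Longrightarrow> h \<in> E \<Longrightarrow> take b (W g) @ drop b (W h) \<in> Lang \<Longrightarrow> g = h"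
  shows "inj_on (\<lambda>g. crossing_seq (\<lambda>h. h < int b) (tm_run M (W g)) (T l)) E"
proof
  fix g h
  assume g: "g \<in> E" and h: "h \<in> E"
    and same: "crossing_seq (\<lambda>h. h < int b) (tm_run M (W g)) (T l) =
      crossing_seq (\<lambda>h. h < int b) (tm_run M (W h)) (T l)"
  have acc: "fst (tm_run M (W x) (T l)) = acc M" if "x \<in> E" for x
    using accepted_within_time[OF decides, of "W x"] words[OF that] Lang by auto
  have "accepts M (take b (W g) @ drop b (W h))"
    using accepts_splice[OF b(1) _ _ acc[OF g] acc[OF h] same] words g h b(2) by simp
  moreover have "take b (W g) @ drop b (W h) \<in> lists \<Sigma>"
    using words[OF g] words[OF h] Lang by (auto dest: in_set_takeD in_set_dropD)
  ultimately have "take b (W g) @ drop b (W h) \<in> Lang"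
    using decides by (simp add: decides_in_time_def)
  then show "g = h" using fooling g h by blast
qed

lemma sum_length_crossing_seq_fooling_set_ge:
  assumes decides: "decides_in_time \<Sigma> M Lang T" and Lang: "Lang \<subseteq> lists \<Sigma>"
    and words: "\<And>g. g \<in> E \<Longrightarrow> W g \<in> Lang \<and> length (W g) = l" and "finite E"
    and b: "0 < b" "b \<le> l"
    and fooling: "\<And>g h. g \<in> E \<Longrightarrow> h \<in> E \<Longrightarrow> take b (W g) @ drop b (W h) \<in> Lang \<Longrightarrow> g = h"
  shows "k * card E \<le> (\<Sum>g\<in>E. length (crossing_seq (\<lambda>h. h < int b) (tm_run M (W g)) (T l)))
    + k * (card (states M) + 1) ^ k"
proof (rule sum_length_inj_lists_ge)
  have wf: "wf_tm \<Sigma> M" using decides by (simp add: decides_in_time_def)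
  then show "finite (states M)" "1 \<le> card (states M)"
    by (auto simp: wf_tm_def Suc_le_eq card_gt_0_iff)
  show "inj_on (\<lambda>g. crossing_seq (\<lambda>h. h < int b) (tm_run M (W g)) (T l)) E"
    by (rule inj_on_crossing_seq_fooling_set[OF decides Lang words b fooling])
  fix g assume "g \<in> E"
  have "set (crossing_seq (\<lambda>h. h < int b) (tm_run M (W g)) (T l)) \<subseteq> range (\<lambda>i. fst (tm_run M (W g) (Suc i)))"
    by (rule set_crossing_seq)
  also have "\<dots> \<subseteq> states M" using tm_run_in_states[OF wf] words[OF \<open>g \<in> E\<close>] Lang by auto
  finally show "set (crossing_seq (\<lambda>h. h < int b) (tm_run M (W g)) (T l)) \<subseteq> states M" .
qed fact

lemma fooling_set_time_bound:
  assumes decides: "decides_in_time \<Sigma> M Lang T" and Lang: "Lang \<subseteq> lists \<Sigma>"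
    and words: "\<And>g. g \<in> E \<Longrightarrow> W g \<in> Lang \<and> length (W g) = l"
    and B: "finite B" "B \<subseteq> {0<..l}"
    and fooling: "\<And>b g h. b \<in> B \<Longrightarrow> g \<in> E \<Longrightarrow> h \<in> E \<Longrightarrow>
      take b (W g) @ drop b (W h) \<in> Lang \<Longrightarrow> g = h"
    and many: "2 * (card (states M) + 1) ^ k \<le> card E"
  shows "card B * k \<le> 2 * T l"
proof -
  define r where "r = card (states M) + 1"
  define cs where "cs g b = crossing_seq (\<lambda>h. h < int b) (tm_run M (W g)) (T l)" for g b
  have "0 < 2 * r ^ k" by (simp add: r_def)
  then have "0 < card E" using many unfolding r_def by (rule less_le_trans)
  then have E: "0 < card E" "finite E" by (auto intro: card_ge_0_finite)
  have count: "k * card E \<le> (\<Sum>g\<in>E. length (cs g b)) + k * r ^ k" if "b \<in> B" for b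
    unfolding cs_def r_def using that B(2)
    by (intro sum_length_crossing_seq_fooling_set_ge[OF decides Lang words E(2)] fooling) auto
  have time: "(\<Sum>b\<in>B. length (cs g b)) \<le> T l" for g
  proof -
    have "(\<Sum>b\<in>B. length (cs g b)) = (\<Sum>b\<in>int ` B. length (crossing_seq (\<lambda>h. h < b) (tm_run M (W g)) (T l)))"
      by (simp add: sum.reindex cs_def)
    also have "\<dots> \<le> T l" using B(1) by (intro sum_crossing_seq_length_le[OF is_run_tm_run]) simp
    finally show ?thesis .
  qed
  have "card B * (k * card E) \<le> (\<Sum>b\<in>B. (\<Sum>g\<in>E. length (cs g b)) + k * r ^ k)"
    using sum_mono[OF count] by simp
  also have "\<dots> = (\<Sum>g\<in>E. \<Sum>b\<in>B. length (cs g b)) + card B * (k * r ^ k)"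
    by (simp add: sum.distrib sum.swap[of _ B E])
  also have "\<dots> \<le> card E * T l + card B * (k * r ^ k)"
    using sum_mono[of E "\<lambda>g. \<Sum>b\<in>B. length (cs g b)" "\<lambda>_. T l"] time by simp
  finally have "card B * k * card E \<le> card E * T l + card B * k * r ^ k"
    by (simp add: ac_simps)
  moreover have "2 * (card B * k * r ^ k) \<le> card B * k * card E"
    using mult_le_mono2[OF many, of "card B * k"] unfolding r_def by (simp only: ac_simps)
  ultimately have "card E * (card B * k) \<le> card E * (2 * T l)" by (simp only: ac_simps)
  then show ?thesis using E(1) by simp
qed

lemma power_div_bound:
  fixes a r :: real
  assumes "1 \<le> r" "4 * r < a ^ m" "1 < a" "0 < m" "m \<le> n"
  shows "4 * r ^ (n div m - 1) \<le> a ^ n"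
proof -
  define k where "k = n div m - 1"
  have "m * k + m = m * (n div m)"
    using assms(4,5) unfolding k_def by (simp add: algebra_simps div_greater_zero_iff Suc_le_eq)
  then have exp: "m * k + m \<le> n" by (metis div_mult_mod_eq le_add1 mult.commute)
  have "4 * r ^ k \<le> 4 * (a ^ m) ^ k" using assms by (simp add: power_mono)
  also have "\<dots> = 4 * a ^ (m * k)" by (simp add: power_mult)
  also have "\<dots> \<le> a ^ m * a ^ (m * k)"
    using assms by (intro mult_right_mono) auto
  also have "\<dots> = a ^ (m * k + m)" by (simp add: power_add)
  also have "\<dots> \<le> a ^ n" using exp assms(3) by (intro power_increasing) auto
  finally show ?thesis unfolding k_def .
qed

lemma square_div_less_mult_div:
  assumes "0 < m" "4 * m < n" "l \<le> 6 * n"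
  shows "real l ^ 2 / (72 * real m) < real (n * (n div m - 1))"
proof -
  have "n mod m < m" using assms(1) by simp
  moreover have "n = m * (n div m) + n mod m" by simp
  ultimately have "n < m * (n div m) + m" by linarith
  moreover have "1 \<le> n div m" using assms(1,2) by (simp add: div_greater_zero_iff Suc_le_eq)
  ultimately have "real n < real m * real (n div m) + real m" "real (n div m - 1) = real (n div m) - 1"
    by (simp_all add: of_nat_diff flip: of_nat_mult of_nat_add)
  moreover have "4 * real m < real n" using assms(2) by (metis of_nat_less_iff of_nat_mult of_nat_numeral)
  ultimately have "real n / 2 < real m * real (n div m - 1)" by (simp add: algebra_simps)
  then have "real n * (real n / 2) < real n * (real m * real (n div m - 1))"
    by (rule mult_strict_left_mono) (use assms(2) in auto)
  moreover have "real l ^ 2 \<le> 36 * real n ^ 2"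
    using power_mono[of "real l" "6 * real n" 2] assms(3) by (simp add: power_mult_distrib)
  moreover have "36 * real n ^ 2 = 72 * (real n * (real n / 2))" by (simp add: power2_eq_square)
  moreover have "72 * (real n * (real m * real (n div m - 1))) = 72 * real m * real (n * (n div m - 1))"
    by simp
  ultimately have "real l ^ 2 < 72 * real m * real (n * (n div m - 1))" by linarith
  then show ?thesis using assms(1) by (simp add: pos_divide_less_eq mult.commute)
qed

lemma word_problem_time_lower_bound:
  assumes G: "group G" and S: "finite_symmetric_generating_set G S" and s: "s \<in> S"
    and growth: "\<And>n. a ^ n \<le> real (growth G S n)" and "1 < a"
    and decides: "decides_in_time S M (word_problem G S) T"
    and m: "4 * real (card (states M) + 1) < a ^ m" "0 < m" "m \<le> n"
  obtains l where "n \<le> l" "l \<le> 6 * n" "n * (n div m - 1) \<le> 2 * T l"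
proof -
  define r where "r = card (states M) + 1"
  define k where "k = n div m - 1"
  obtain N where N: "N = n \<or> N = Suc n" "a ^ n \<le> 2 * real (card (word_values G S N))"
    using group.exists_large_word_values[OF G S s growth] by blast
  obtain W where W: "\<And>g. g \<in> word_values G S N \<Longrightarrow> W g \<in> word_problem G S \<and> length (W g) = 2 * (N + n)"
    "\<And>b g h. b \<in> {N<..N + n} \<Longrightarrow> g \<in> word_values G S N \<Longrightarrow> h \<in> word_values G S N \<Longrightarrow>
       take b (W g) @ drop b (W h) \<in> word_problem G S \<Longrightarrow> g = h"
    using group.word_problem_fooling_set[OF G S s] by blast
  have "4 * real r ^ k \<le> a ^ n"
    unfolding k_def r_def using power_div_bound[OF _ m(1) \<open>1 < a\<close> m(2,3)] by simp
  with N(2) have "real (2 * r ^ k) \<le> real (card (word_values G S N))"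
    by simp
  then have "card {N<..N + n} * k \<le> 2 * T (2 * (N + n))"
    unfolding of_nat_le_iff
    by (intro fooling_set_time_bound[OF decides _ W(1) _ _ W(2)]) (auto simp: word_problem_def r_def)
  then have "n * (n div m - 1) \<le> 2 * T (2 * (N + n))" unfolding k_def by simp
  moreover have "n \<le> 2 * (N + n)" "2 * (N + n) \<le> 6 * n" using N(1) m(2,3) by auto
  ultimately show ?thesis using that by blast
qed

theorem mainTheorem4:
  fixes G :: "('a, 'b) monoid_scheme" and S :: "'a set"
  assumes "group G"
    and "finite_symmetric_generating_set G S"
    and "exponential_growth G S"
  shows "\<not> DTIME1_o_n2 S (word_problem G S)"
proof
  assume "DTIME1_o_n2 S (word_problem G S)"
  then obtain M :: "'a tm" and T where small: "(\<lambda>n. real (T n)) \<in> o(\<lambda>n. real n ^ 2)"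
    and decides: "decides_in_time S M (word_problem G S) T"
    unfolding DTIME1_o_n2_def by blast
  obtain a :: real where a: "1 < a" "\<And>n. a ^ n \<le> real (growth G S n)"
    using assms(3) unfolding exponential_growth_def by blast
  obtain s where s: "s \<in> S" using group.generating_set_nonempty[OF assms] by blast
  obtain m where m: "4 * real (card (states M) + 1) < a ^ m" using real_arch_pow[OF a(1)] by blast
  then have "0 < m" by (cases m) auto
  then obtain n0 where n0: "\<And>x. n0 \<le> x \<Longrightarrow> real (T x) \<le> 1 / (144 * real m) * real x ^ 2"
    using landau_o.smallD[OF small, of "1 / (144 * real m)"] by (auto simp: eventually_at_top_linorder)
  define n where "n = max n0 (4 * m + 1)"
  then have n: "n0 \<le> n" "4 * m < n" by auto
  obtain l where l: "n \<le> l" "l \<le> 6 * n" "n * (n div m - 1) \<le> 2 * T l"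
    using word_problem_time_lower_bound[OF assms(1,2) s a(2,1) decides m \<open>0 < m\<close>, of n] n(2) by auto
  have "real (n * (n div m - 1)) \<le> 2 * real (T l)" using l(3) by (simp flip: of_nat_mult)
  also have "\<dots> \<le> real l ^ 2 / (72 * real m)" using n0[of l] n(1) l(1) by simp
  finally show False using square_div_less_mult_div[OF \<open>0 < m\<close> n(2) l(2)] by linarith
qed

end
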